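(* Let $X\subseteq\mathbb{R}^N$ be a closed convex set with $0\notin X$, let $p\in[e^{-1},1)$, and let $\kappa$ be twice differentiable with $0<\kappa(x)\le1$ for all $x\in X$. Define $U(x,y):=\psi_x^{-1}(y\,\psi_x(p))=p^{\,y^{\kappa(x)}}$ for $(x,y)\in X\times(0,1)$, where $\psi_x(t)=(-\ln t)^{1/\kappa(x)}$. Let $d>0$ be a constant with $1/\omega(x,y)\ge d\,\kappa(x)$ for all $(x,y)\in X\times(0,1)$, and assume that $d\,\kappa(x)\nabla^2\kappa(x)-\nabla\kappa(x)\nabla\kappa(x)^T$ is positive semidefinite for every $x\in X$. Then $U$ is jointly convex on $X\times(0,1)$. If moreover $d\,\kappa(x)\nabla^2\kappa(x)-\nabla\kappa(x)\nabla\kappa(x)^T$ is positive definite for every $x\in X$, then $U$ is strictly convex on $X\times(0,1)$.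
   Context: $\omega=\varphi_2/\varphi_1$ where $\varphi_1(x,y)=\kappa(x)\ln y[\kappa(x)-1+\kappa(x)\ln p\,y^{\kappa(x)}]$ and $\varphi_2(x,y)=\kappa(x)(\ln y)^2(1+\ln p\,y^{\kappa(x)})[1-\kappa(x)-\kappa(x)\ln p\,y^{\kappa(x)}]+(1+\kappa(x)\ln y+\ln p\ln y\,y^{\kappa(x)}\kappa(x))^2$. $\nabla^2\kappa$ and $\nabla\kappa$ denote the Hessian and gradient of $\kappa$. *)

theory Defs
  imports "HOL-Analysis.Analysis"
begin

definition strict_convex_on :: "'a::real_vector set \<Rightarrow> ('a \<Rightarrow> real) \<Rightarrow> bool"
  where "strict_convex_on S f \<longleftrightarrow> convex S \<and>
    (\<forall>x\<in>S. \<forall>y\<in>S. \<forall>t. x \<noteq> y \<longrightarrow> 0 < t \<longrightarrow> t < 1 \<longrightarrow>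
       f ((1 - t) *\<^sub>R x + t *\<^sub>R y) < (1 - t) * f x + t * f y)"

definition psd_mat :: "real^'n^'n \<Rightarrow> bool"
  where "psd_mat A \<longleftrightarrow> (\<forall>v. 0 \<le> v \<bullet> (A *v v))"

definition pd_mat :: "real^'n^'n \<Rightarrow> bool"
  where "pd_mat A \<longleftrightarrow> (\<forall>v. v \<noteq> 0 \<longrightarrow> 0 < v \<bullet> (A *v v))"

definition outer_prod :: "real^'n \<Rightarrow> real^'n \<Rightarrow> real^'n^'n"
  where "outer_prod g h = (\<chi> i j. g $ i * h $ j)"

definition psi :: "real \<Rightarrow> real \<Rightarrow> real"
  where "psi k t = (- ln t) powr (1 / k)"

text \<open>U(x,y) = p^(y^kappa(x)), with k = kappa(x).\<close>
definition Ufun :: "real \<Rightarrow> real \<Rightarrow> real \<Rightarrow> real"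
  where "Ufun p k y = p powr (y powr k)"

text \<open>phi_1, phi_2, omega as functions of k = kappa(x), p and y.\<close>
definition phi1 :: "real \<Rightarrow> real \<Rightarrow> real \<Rightarrow> real"
  where "phi1 p k y = k * ln y * (k - 1 + k * ln p * y powr k)"

definition phi2 :: "real \<Rightarrow> real \<Rightarrow> real \<Rightarrow> real"
  where "phi2 p k y = k * (ln y)\<^sup>2 * (1 + ln p * y powr k) * (1 - k - k * ln p * y powr k)
                      + (1 + k * ln y + ln p * ln y * y powr k * k)\<^sup>2"

definition omega :: "real \<Rightarrow> real \<Rightarrow> real \<Rightarrow> real"
  where "omega p k y = phi2 p k y / phi1 p k y"

end

theory Submission
  imports Defs
begin

text \<open>
  Restrict \<open>U\<close> to a segment \<open>s \<mapsto> (x\<^sub>0 + s v, y\<^sub>0 + s w)\<close> and write \<open>k, k', k''\<close> for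
  \<open>\<kappa>\<close> and its first two derivatives along it, i.e. \<open>\<nabla>\<kappa> \<bullet> v\<close> and \<open>v \<bullet> \<nabla>\<^sup>2\<kappa> v\<close>.
  The second derivative of the restriction is \<open>U (-ln p) y\<^sup>k\<close> times an expression
  \<open>E\<close> (\<open>second_variation\<close> below), and multiplying \<open>E\<close> by the positive weight
  \<open>k (1 - k - k ln p y\<^sup>k)\<close> gives \<open>\<phi>\<^sub>1 k'' - \<phi>\<^sub>2 k'\<^sup>2\<close> plus a perfect square.
  The bound \<open>1/\<omega> \<ge> d k\<close> turns the semidefiniteness of \<open>d k \<nabla>\<^sup>2\<kappa> - \<nabla>\<kappa> \<nabla>\<kappa>\<^sup>T\<close>,
  i.e. \<open>k'\<^sup>2 \<le> d k k''\<close>, into \<open>\<phi>\<^sub>2 k'\<^sup>2 \<le> \<phi>\<^sub>1 k''\<close>, so \<open>U\<close> is convex along every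
  segment; definiteness makes the second derivative positive on nondegenerate segments.
\<close>

lemma convex_combination_gap_MVT:
  fixes g g' :: "real \<Rightarrow> real"
  assumes g: "\<And>s. s \<in> {0..1} \<Longrightarrow> (g has_real_derivative g' s) (at s)"
    and t: "0 < t" "t < 1"
  obtains a b where "0 < a" "a < t" "t < b" "b < 1"
    "(1 - t) * g 0 + t * g 1 - g t = t * (1 - t) * (g' b - g' a)"
proof -
  obtain a where a: "0 < a" "a < t" "g t - g 0 = t * g' a"
    using MVT2[of 0 t g g'] g t by auto
  obtain b where b: "t < b" "b < 1" "g 1 - g t = (1 - t) * g' b"
    using MVT2[of t 1 g g'] g t by auto
  have "(1 - t) * g 0 + t * g 1 - g t = t * (g 1 - g t) - (1 - t) * (g t - g 0)"
    by (simp add: algebra_simps)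
  also have "\<dots> = t * (1 - t) * (g' b - g' a)"
    by (simp add: a(3) b(3) algebra_simps)
  finally show ?thesis using that a b by blast
qed

lemma second_derivative_nonneg_imp_convex_combination_le:
  fixes g g' g'' :: "real \<Rightarrow> real"
  assumes g: "\<And>s. s \<in> {0..1} \<Longrightarrow> (g has_real_derivative g' s) (at s)"
    and g': "\<And>s. s \<in> {0..1} \<Longrightarrow> (g' has_real_derivative g'' s) (at s)"
    and nonneg: "\<And>s. s \<in> {0..1} \<Longrightarrow> 0 \<le> g'' s"
    and t: "0 < t" "t < 1"
  shows "g t \<le> (1 - t) * g 0 + t * g 1"
proof -
  obtain a b where ab: "0 < a" "a < t" "t < b" "b < 1"
    and gap: "(1 - t) * g 0 + t * g 1 - g t = t * (1 - t) * (g' b - g' a)"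
    using convex_combination_gap_MVT[OF g t] by blast
  have "g' a \<le> g' b"
  proof (rule DERIV_nonneg_imp_increasing_open[of a b g'])
    show "\<exists>y. (g' has_real_derivative y) (at x) \<and> 0 \<le> y" if "a < x" "x < b" for x
      using that ab by (intro exI[of _ "g'' x"] conjI g' nonneg) auto
    show "continuous_on {a..b} g'"
      using ab by (intro continuous_at_imp_continuous_on ballI DERIV_isCont[OF g']) auto
  qed (use ab in simp)
  then show ?thesis
    using gap t by (smt (verit) mult_nonneg_nonneg)
qed

lemma second_derivative_pos_imp_convex_combination_less:
  fixes g g' g'' :: "real \<Rightarrow> real"
  assumes g: "\<And>s. s \<in> {0..1} \<Longrightarrow> (g has_real_derivative g' s) (at s)"
    and g': "\<And>s. s \<in> {0..1} \<Longrightarrow> (g' has_real_derivative g'' s) (at s)"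
    and pos: "\<And>s. s \<in> {0..1} \<Longrightarrow> 0 < g'' s"
    and t: "0 < t" "t < 1"
  shows "g t < (1 - t) * g 0 + t * g 1"
proof -
  obtain a b where ab: "0 < a" "a < t" "t < b" "b < 1"
    and gap: "(1 - t) * g 0 + t * g 1 - g t = t * (1 - t) * (g' b - g' a)"
    using convex_combination_gap_MVT[OF g t] by blast
  have "g' a < g' b"
  proof (rule DERIV_pos_imp_increasing[of a b g'])
    show "\<exists>y. (g' has_real_derivative y) (at x) \<and> 0 < y" if "a \<le> x" "x \<le> b" for x
      using that ab by (intro exI[of _ "g'' x"] conjI g' pos) auto
  qed (use ab in simp)
  then show ?thesis
    using gap t by (smt (verit) mult_pos_pos)
qed

lemma convex_on_if_second_derivative_along_segments:
  fixes f :: "'a::real_vector \<Rightarrow> real"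
  assumes "convex C"
    and "\<And>a b. a \<in> C \<Longrightarrow> b \<in> C \<Longrightarrow> \<exists>f' f''. \<forall>s\<in>{0..1}.
           ((\<lambda>s. f (a + s *\<^sub>R (b - a))) has_real_derivative f' s) (at s) \<and>
           (f' has_real_derivative f'' s) (at s) \<and> 0 \<le> f'' s"
  shows "convex_on C f"
proof (rule convex_onI[OF _ \<open>convex C\<close>])
  fix t :: real and a b assume t: "0 < t" "t < 1" and ab: "a \<in> C" "b \<in> C"
  then obtain f' f'' where "\<forall>s\<in>{0..1}.
      ((\<lambda>s. f (a + s *\<^sub>R (b - a))) has_real_derivative f' s) (at s) \<and>
      (f' has_real_derivative f'' s) (at s) \<and> 0 \<le> f'' s"
    using assms(2) by blast
  then have "f (a + t *\<^sub>R (b - a)) \<le> (1 - t) * f (a + 0 *\<^sub>R (b - a)) + t * f (a + 1 *\<^sub>R (b - a))"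
    by (intro second_derivative_nonneg_imp_convex_combination_le[OF _ _ _ t]) auto
  then show "f ((1 - t) *\<^sub>R a + t *\<^sub>R b) \<le> (1 - t) * f a + t * f b"
    by (simp add: algebra_simps)
qed

lemma strict_convex_on_if_second_derivative_along_segments:
  fixes f :: "'a::real_vector \<Rightarrow> real"
  assumes "convex C"
    and "\<And>a b. a \<in> C \<Longrightarrow> b \<in> C \<Longrightarrow> a \<noteq> b \<Longrightarrow> \<exists>f' f''. \<forall>s\<in>{0..1}.
           ((\<lambda>s. f (a + s *\<^sub>R (b - a))) has_real_derivative f' s) (at s) \<and>
           (f' has_real_derivative f'' s) (at s) \<and> 0 < f'' s"
  shows "strict_convex_on C f"
  unfolding strict_convex_on_def
proof (intro conjI ballI allI impI \<open>convex C\<close>)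
  fix t :: real and a b assume ab: "a \<in> C" "b \<in> C" "a \<noteq> b" and t: "0 < t" "t < 1"
  then obtain f' f'' where "\<forall>s\<in>{0..1}.
      ((\<lambda>s. f (a + s *\<^sub>R (b - a))) has_real_derivative f' s) (at s) \<and>
      (f' has_real_derivative f'' s) (at s) \<and> 0 < f'' s"
    using assms(2) by blast
  then have "f (a + t *\<^sub>R (b - a)) < (1 - t) * f (a + 0 *\<^sub>R (b - a)) + t * f (a + 1 *\<^sub>R (b - a))"
    by (intro second_derivative_pos_imp_convex_combination_less[OF _ _ _ t]) auto
  then show "f ((1 - t) *\<^sub>R a + t *\<^sub>R b) < (1 - t) * f a + t * f b"
    by (simp add: algebra_simps)
qed

text \<open>\<open>k'\<close>, \<open>k''\<close> are the derivatives of \<open>\<kappa>\<close> along the curve and \<open>r = y'/y\<close>.\<close>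

definition second_variation :: "real \<Rightarrow> real \<Rightarrow> real \<Rightarrow> real \<Rightarrow> real \<Rightarrow> real \<Rightarrow> real"
  where "second_variation p k y k' k'' r =
    (- ln p * y powr k - 1) * (k' * ln y + k * r)\<^sup>2 - k'' * ln y - 2 * k' * r + k * r\<^sup>2"

lemma second_variation_identity:
  "k * (1 - k - k * ln p * y powr k) * second_variation p k y k' k'' r =
     phi1 p k y * k'' - phi2 p k y * k'\<^sup>2
     + (k * (1 - k - k * ln p * y powr k) * r - (ln p * y powr k * k * ln y + k * ln y + 1) * k')\<^sup>2"
  unfolding second_variation_def phi1_def phi2_def by (simp add: power2_eq_square algebra_simps)

lemma second_variation_weight_pos:
  fixes p k y :: real
  assumes "0 < p" "p < 1" "0 < k" "k \<le> 1" "0 < y"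
  shows "0 < k * (1 - k - k * ln p * y powr k)"
proof -
  have "ln p < 0" "0 < y powr k"
    using assms by (simp_all add: ln_less_zero)
  then have "k * ln p * y powr k < 0"
    using assms(3) by (simp add: mult_pos_neg mult_neg_pos)
  then show ?thesis
    using assms by simp
qed

lemma phi1_pos:
  assumes "0 < p" "p < 1" "0 < k" "k \<le> 1" "0 < y" "y < 1"
  shows "0 < phi1 p k y"
proof -
  have "phi1 p k y = - ln y * (k * (1 - k - k * ln p * y powr k))"
    by (simp add: phi1_def algebra_simps)
  moreover have "ln y < 0"
    using assms(5,6) by (rule ln_less_zero)
  ultimately show ?thesis
    using second_variation_weight_pos[OF assms(1-5)] by (simp add: mult_neg_pos)
qed

lemma phi2_mult_le_phi1_mult:
  assumes phi1: "0 < phi1 p k y" and m: "0 < m" "m \<le> 1 / omega p k y"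
    and ab: "0 \<le> a" "a \<le> m * b"
  shows "phi2 p k y * a \<le> phi1 p k y * b"
    and "a < m * b \<Longrightarrow> phi2 p k y * a < phi1 p k y * b"
proof -
  have m_le: "m \<le> phi1 p k y / phi2 p k y"
    using m(2) by (simp add: omega_def)
  then have phi2: "0 < phi2 p k y"
    using phi1 m(1) by (smt (verit) divide_nonneg_nonpos)
  have "phi2 p k y * (m * b) \<le> phi1 p k y * b"
  proof -
    have "0 \<le> b"
      using ab m(1) by (smt (verit) zero_le_mult_iff)
    moreover have "phi2 p k y * m \<le> phi1 p k y"
      using m_le phi2 by (simp add: le_divide_eq mult.commute)
    ultimately show ?thesis
      by (metis mult.assoc mult_right_mono)
  qed
  then show "phi2 p k y * a \<le> phi1 p k y * b"
    using ab(2) phi2 by (smt (verit) mult_left_mono)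
  show "phi2 p k y * a < phi1 p k y * b" if "a < m * b"
    using that phi2 \<open>phi2 p k y * (m * b) \<le> phi1 p k y * b\<close> by (smt (verit) mult_strict_left_mono)
qed

lemma quadratic_form_scaleR_minus_outer_prod:
  fixes A :: "real^'n^'n" and g v :: "real^'n"
  shows "v \<bullet> ((c *\<^sub>R A - outer_prod g g) *v v) = c * (v \<bullet> (A *v v)) - (g \<bullet> v)\<^sup>2"
proof -
  have "outer_prod g g *v v = (g \<bullet> v) *\<^sub>R g"
    by (simp add: outer_prod_def matrix_vector_mult_def inner_vec_def vec_eq_iff
        sum_distrib_left mult.commute mult.left_commute)
  then show ?thesis
    by (simp add: matrix_vector_mult_diff_rdistrib inner_diff_right power2_eq_square
        scaleR_matrix_vector_assoc[symmetric] inner_commute)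
qed

lemma second_variation_nonneg_if_psd:
  fixes H :: "real^'n^'n" and g v :: "real^'n"
  assumes "0 < p" "p < 1" "0 < k" "k \<le> 1" "0 < y" "y < 1" "0 < d"
    and omega_bound: "d * k \<le> 1 / omega p k y"
    and psd: "psd_mat ((d * k) *\<^sub>R H - outer_prod g g)"
  shows "0 \<le> second_variation p k y (g \<bullet> v) (v \<bullet> (H *v v)) r"
proof -
  have "(g \<bullet> v)\<^sup>2 \<le> d * k * (v \<bullet> (H *v v))"
    using psd unfolding psd_mat_def quadratic_form_scaleR_minus_outer_prod by (metis diff_ge_0_iff_ge)
  then have "phi2 p k y * (g \<bullet> v)\<^sup>2 \<le> phi1 p k y * (v \<bullet> (H *v v))"
    using assms by (intro phi2_mult_le_phi1_mult phi1_pos) auto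
  then have "0 \<le> k * (1 - k - k * ln p * y powr k) * second_variation p k y (g \<bullet> v) (v \<bullet> (H *v v)) r"
    unfolding second_variation_identity by (smt (verit) zero_le_power2)
  then show ?thesis
    using second_variation_weight_pos[OF assms(1-5)] by (smt (verit) mult_pos_neg)
qed

lemma second_variation_pos_if_pd:
  fixes H :: "real^'n^'n" and g v :: "real^'n"
  assumes "0 < p" "p < 1" "0 < k" "k \<le> 1" "0 < y" "y < 1" "0 < d"
    and omega_bound: "d * k \<le> 1 / omega p k y"
    and pd: "pd_mat ((d * k) *\<^sub>R H - outer_prod g g)"
    and nontrivial: "v \<noteq> 0 \<or> r \<noteq> 0"
  shows "0 < second_variation p k y (g \<bullet> v) (v \<bullet> (H *v v)) r"
proof -
  have weight: "0 < k * (1 - k - k * ln p * y powr k)"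
    using second_variation_weight_pos assms by simp
  have "0 < k * (1 - k - k * ln p * y powr k) * second_variation p k y (g \<bullet> v) (v \<bullet> (H *v v)) r"
  proof (cases "v = 0")
    case True
    then have "r \<noteq> 0"
      using nontrivial by simp
    with weight have "0 < (k * (1 - k - k * ln p * y powr k) * r)\<^sup>2"
      by (metis less_irrefl mult_eq_0_iff zero_less_power2)
    then show ?thesis
      using True unfolding second_variation_identity by simp
  next
    case False
    then have "(g \<bullet> v)\<^sup>2 < d * k * (v \<bullet> (H *v v))"
      using pd unfolding pd_mat_def quadratic_form_scaleR_minus_outer_prod by (metis diff_gt_0_iff_gt)
    then have "phi2 p k y * (g \<bullet> v)\<^sup>2 < phi1 p k y * (v \<bullet> (H *v v))"
      using assms by (intro phi2_mult_le_phi1_mult(2) phi1_pos) auto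
    then show ?thesis
      unfolding second_variation_identity by (smt (verit) zero_le_power2)
  qed
  then show ?thesis
    using weight by (smt (verit) mult_nonneg_nonpos)
qed

lemma has_real_derivative_Ufun:
  fixes K Y :: "real \<Rightarrow> real"
  assumes p: "0 < p" and Y_pos: "0 < Y s"
    and K: "(K has_real_derivative K') (at s)" and Y: "(Y has_real_derivative Y') (at s)"
  shows "((\<lambda>s. Ufun p (K s) (Y s)) has_real_derivative
           Ufun p (K s) (Y s) * ln p * (Y s powr K s * (K' * ln (Y s) + Y' * K s / Y s))) (at s)"
  using DERIV_powr[OF DERIV_const p DERIV_powr[OF Y Y_pos K]]
  by (simp add: Ufun_def mult_ac)

lemma has_real_derivative_Ufun_derivative:
  fixes K K' Y :: "real \<Rightarrow> real"
  assumes p: "0 < p" and Y_pos: "0 < Y s"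
    and K: "(K has_real_derivative K' s) (at s)" and K': "(K' has_real_derivative K'') (at s)"
    and Y: "(Y has_real_derivative w) (at s)"
  shows "((\<lambda>s. Ufun p (K s) (Y s) * ln p * (Y s powr K s * (K' s * ln (Y s) + K s * (w / Y s))))
           has_real_derivative
           Ufun p (K s) (Y s) * (- ln p) * Y s powr K s * second_variation p (K s) (Y s) (K' s) K'' (w / Y s))
         (at s)"
proof -
  define D where "D s = K' s * ln (Y s) + K s * (w / Y s)" for s
  define D' where "D' = K'' * ln (Y s) + 2 * K' s * (w / Y s) - K s * (w / Y s)\<^sup>2"
  have U: "((\<lambda>s. Ufun p (K s) (Y s)) has_real_derivative
             Ufun p (K s) (Y s) * ln p * (Y s powr K s * D s)) (at s)"
    using has_real_derivative_Ufun[OF p Y_pos K Y] by (simp add: D_def mult_ac)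
  have P: "((\<lambda>s. Y s powr K s) has_real_derivative Y s powr K s * D s) (at s)"
    using DERIV_powr[OF Y Y_pos K] by (simp add: D_def mult_ac)
  have L: "((\<lambda>s. ln (Y s)) has_real_derivative inverse (Y s) * w) (at s)"
    using DERIV_chain2[OF DERIV_ln[OF Y_pos] Y] .
  have R: "((\<lambda>s. w / Y s) has_real_derivative (0 * Y s - w * w) / (Y s * Y s)) (at s)"
    using DERIV_divide[OF DERIV_const Y] Y_pos by simp
  have D: "(D has_real_derivative D') (at s)"
    unfolding D_def
    by (rule DERIV_cong[OF DERIV_add[OF DERIV_mult[OF K' L] DERIV_mult[OF K R]]])
      (use Y_pos in \<open>simp add: D'_def field_simps power2_eq_square\<close>)
  have sv: "second_variation p (K s) (Y s) (K' s) K'' (w / Y s) = (- ln p * Y s powr K s - 1) * (D s)\<^sup>2 - D'"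
    by (simp add: second_variation_def D_def D'_def)
  have "((\<lambda>s. Ufun p (K s) (Y s) * ln p * (Y s powr K s * D s)) has_real_derivative
      Ufun p (K s) (Y s) * (- ln p) * Y s powr K s * second_variation p (K s) (Y s) (K' s) K'' (w / Y s))
      (at s)"
    by (rule derivative_eq_intros U P D refl)+ (simp add: sv power2_eq_square algebra_simps)
  then show ?thesis
    by (simp add: D_def)
qed

lemma Ufun_along_curve_has_second_derivative:
  fixes K K' K'' Y :: "real \<Rightarrow> real"
  assumes p: "0 < p" and Y_pos: "\<And>s. s \<in> A \<Longrightarrow> 0 < Y s"
    and K: "\<And>s. s \<in> A \<Longrightarrow> (K has_real_derivative K' s) (at s)"
    and K': "\<And>s. s \<in> A \<Longrightarrow> (K' has_real_derivative K'' s) (at s)"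
    and Y: "\<And>s. (Y has_real_derivative w) (at s)"
  shows "\<exists>f'. \<forall>s\<in>A. ((\<lambda>s. Ufun p (K s) (Y s)) has_real_derivative f' s) (at s) \<and>
           (f' has_real_derivative
              Ufun p (K s) (Y s) * (- ln p) * Y s powr K s *
              second_variation p (K s) (Y s) (K' s) (K'' s) (w / Y s)) (at s)"
proof (intro exI ballI conjI)
  fix s assume "s \<in> A"
  show "((\<lambda>s. Ufun p (K s) (Y s)) has_real_derivative
      Ufun p (K s) (Y s) * ln p * (Y s powr K s * (K' s * ln (Y s) + K s * (w / Y s)))) (at s)"
    using has_real_derivative_Ufun[OF p Y_pos K Y, OF \<open>s \<in> A\<close> \<open>s \<in> A\<close>] by (simp add: mult_ac)
  show "((\<lambda>s. Ufun p (K s) (Y s) * ln p * (Y s powr K s * (K' s * ln (Y s) + K s * (w / Y s))))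
      has_real_derivative Ufun p (K s) (Y s) * (- ln p) * Y s powr K s *
        second_variation p (K s) (Y s) (K' s) (K'' s) (w / Y s)) (at s)"
    using \<open>s \<in> A\<close> by (intro has_real_derivative_Ufun_derivative p Y_pos K K' Y)
qed

lemma has_real_derivative_along_line:
  fixes f :: "'a::real_normed_vector \<Rightarrow> real"
  assumes f: "(f has_derivative f') (at (a + s *\<^sub>R v))" and "linear f'"
  shows "((\<lambda>s. f (a + s *\<^sub>R v)) has_real_derivative f' v) (at s)"
proof -
  have "((\<lambda>s. a + s *\<^sub>R v) has_derivative (\<lambda>h. h *\<^sub>R v)) (at s)"
    by (auto intro!: derivative_eq_intros)
  from has_derivative_compose[OF this f] show ?thesis
    unfolding has_field_derivative_def
    by (rule has_derivative_eq_rhs) (simp add: fun_eq_iff linear_scale[OF \<open>linear f'\<close>])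
qed

lemma has_real_derivative_gradient_along_line:
  fixes f :: "'a::real_inner \<Rightarrow> real"
  assumes "(f has_derivative (\<lambda>h. g \<bullet> h)) (at (a + s *\<^sub>R v))"
  shows "((\<lambda>s. f (a + s *\<^sub>R v)) has_real_derivative g \<bullet> v) (at s)"
  using assms bounded_linear_inner_right[of g]
  by (intro has_real_derivative_along_line) (auto simp: bounded_linear.linear)

lemma has_real_derivative_Hessian_along_line:
  fixes g :: "real^'n \<Rightarrow> real^'n" and H :: "real^'n^'n"
  assumes "(g has_derivative (\<lambda>h. H *v h)) (at (a + s *\<^sub>R v))"
  shows "((\<lambda>s. g (a + s *\<^sub>R v) \<bullet> v) has_real_derivative v \<bullet> (H *v v)) (at s)"
proof -
  have "((\<lambda>x. g x \<bullet> v) has_derivative (\<lambda>h. (H *v h) \<bullet> v)) (at (a + s *\<^sub>R v))"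
    using bounded_linear.has_derivative[OF bounded_linear_inner_left assms] .
  moreover have "linear (\<lambda>h. (H *v h) \<bullet> v)"
    by (auto simp: linear_iff matrix_vector_right_distrib inner_add_left matrix_vector_mult_scaleR)
  ultimately show ?thesis
    by (auto dest: has_real_derivative_along_line simp: inner_commute)
qed

lemma Ufun_segment_second_derivative_sign:
  fixes X :: "(real^'n) set" and \<kappa> :: "real^'n \<Rightarrow> real"
    and grad\<kappa> :: "real^'n \<Rightarrow> real^'n" and hess\<kappa> :: "real^'n \<Rightarrow> real^'n^'n"
  assumes X_convex: "convex X" and p: "0 < p" "p < 1"
    and grad: "\<And>x. x \<in> X \<Longrightarrow> (\<kappa> has_derivative (\<lambda>h. grad\<kappa> x \<bullet> h)) (at x)"
    and hess: "\<And>x. x \<in> X \<Longrightarrow> (grad\<kappa> has_derivative (\<lambda>h. hess\<kappa> x *v h)) (at x)"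
    and \<kappa>_range: "\<And>x. x \<in> X \<Longrightarrow> 0 < \<kappa> x \<and> \<kappa> x \<le> 1"
    and d_pos: "0 < d"
    and d_bound: "\<And>x y. x \<in> X \<Longrightarrow> 0 < y \<Longrightarrow> y < 1 \<Longrightarrow> d * \<kappa> x \<le> 1 / omega p (\<kappa> x) y"
    and psd: "\<And>x. x \<in> X \<Longrightarrow> psd_mat ((d * \<kappa> x) *\<^sub>R hess\<kappa> x - outer_prod (grad\<kappa> x) (grad\<kappa> x))"
    and a: "a \<in> X \<times> {0<..<1}" and b: "b \<in> X \<times> {0<..<1}"
  shows "\<exists>f' f''. \<forall>s\<in>{0..1}.
           ((\<lambda>s. (\<lambda>(x, y). Ufun p (\<kappa> x) y) (a + s *\<^sub>R (b - a))) has_real_derivative f' s) (at s) \<and>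
           (f' has_real_derivative f'' s) (at s) \<and> 0 \<le> f'' s \<and>
           ((\<forall>x\<in>X. pd_mat ((d * \<kappa> x) *\<^sub>R hess\<kappa> x - outer_prod (grad\<kappa> x) (grad\<kappa> x))) \<and> a \<noteq> b
              \<longrightarrow> 0 < f'' s)"
proof -
  obtain x0 y0 x1 y1 where ab: "a = (x0, y0)" "b = (x1, y1)"
    by fastforce
  define v where "v = x1 - x0"
  define w where "w = y1 - y0"
  define xs where "xs s = x0 + s *\<^sub>R v" for s
  define Y where "Y s = y0 + s * w" for s
  define K where "K s = \<kappa> (xs s)" for s
  define K' where "K' s = grad\<kappa> (xs s) \<bullet> v" for s
  define K'' where "K'' s = v \<bullet> (hess\<kappa> (xs s) *v v)" for s
  define f'' where "f'' s = Ufun p (K s) (Y s) * (- ln p) * Y s powr K s *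
      second_variation p (K s) (Y s) (K' s) (K'' s) (w / Y s)" for s
  have on_segment: "xs s \<in> X \<and> 0 < Y s \<and> Y s < 1" if "s \<in> {0..1}" for s
  proof -
    have "convex (X \<times> {0<..<(1::real)})"
      by (intro convex_Times X_convex convex_real_interval)
    then have "(1 - s) *\<^sub>R a + s *\<^sub>R b \<in> X \<times> {0<..<1}"
      using a b that by (intro convexD) auto
    moreover have "(1 - s) *\<^sub>R a + s *\<^sub>R b = (xs s, Y s)"
      by (simp add: ab xs_def Y_def v_def w_def algebra_simps)
    ultimately show ?thesis
      by simp
  qed
  have DK: "(K has_real_derivative K' s) (at s)" if "s \<in> {0..1}" for s
    unfolding K_def K'_def xs_def
    using on_segment[OF that] by (intro has_real_derivative_gradient_along_line grad) (simp add: xs_def)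
  have DK': "(K' has_real_derivative K'' s) (at s)" if "s \<in> {0..1}" for s
    unfolding K'_def K''_def xs_def
    using on_segment[OF that] by (intro has_real_derivative_Hessian_along_line hess) (simp add: xs_def)
  have DY: "(Y has_real_derivative w) (at s)" for s
    unfolding Y_def by (auto intro!: derivative_eq_intros)
  have Y_pos: "\<And>s. s \<in> {0..1} \<Longrightarrow> 0 < Y s"
    using on_segment by blast
  obtain f' where f': "\<forall>s\<in>{0..1}. ((\<lambda>s. Ufun p (K s) (Y s)) has_real_derivative f' s) (at s) \<and>
      (f' has_real_derivative f'' s) (at s)"
    using Ufun_along_curve_has_second_derivative[OF p(1) Y_pos DK DK' DY] unfolding f''_def by blast
  have restriction: "(\<lambda>s. (\<lambda>(x, y). Ufun p (\<kappa> x) y) (a + s *\<^sub>R (b - a))) = (\<lambda>s. Ufun p (K s) (Y s))"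
    by (simp add: ab K_def xs_def Y_def v_def w_def)
  have factor_pos: "0 < Ufun p (K s) (Y s) * (- ln p) * Y s powr K s" if "s \<in> {0..1}" for s
    using p on_segment[OF that] by (intro mult_pos_pos) (simp_all add: Ufun_def ln_less_zero)
  have nonneg: "0 \<le> f'' s" if "s \<in> {0..1}" for s
  proof -
    have "0 \<le> second_variation p (K s) (Y s) (K' s) (K'' s) (w / Y s)"
      unfolding K_def K'_def K''_def using on_segment[OF that] \<kappa>_range d_bound
      by (intro second_variation_nonneg_if_psd[where d = d] p d_pos psd) auto
    then show ?thesis
      unfolding f''_def by (rule mult_nonneg_nonneg[OF less_imp_le[OF factor_pos[OF that]]])
  qed
  have pos: "0 < f'' s"
    if "s \<in> {0..1}" and pd: "\<forall>x\<in>X. pd_mat ((d * \<kappa> x) *\<^sub>R hess\<kappa> x - outer_prod (grad\<kappa> x) (grad\<kappa> x))"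
      and "a \<noteq> b" for s
  proof -
    have "v \<noteq> 0 \<or> w / Y s \<noteq> 0"
      using \<open>a \<noteq> b\<close> on_segment[OF that(1)] by (auto simp: ab v_def w_def)
    then have "0 < second_variation p (K s) (Y s) (K' s) (K'' s) (w / Y s)"
      unfolding K_def K'_def K''_def using on_segment[OF that(1)] \<kappa>_range d_bound pd
      by (intro second_variation_pos_if_pd[where d = d] p d_pos) auto
    then show ?thesis
      unfolding f''_def by (rule mult_pos_pos[OF factor_pos[OF that(1)]])
  qed
  show ?thesis
    unfolding restriction by (rule exI[of _ f'], rule exI[of _ f'']) (use f' nonneg pos in blast)
qed

theorem lemma2p13:
  fixes X :: "(real^'n) set" and S :: "(real^'n) set"
    and \<kappa> :: "real^'n \<Rightarrow> real"
    and grad\<kappa> :: "real^'n \<Rightarrow> real^'n"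
    and hess\<kappa> :: "real^'n \<Rightarrow> real^'n^'n"
    and p d :: real
  assumes X_closed: "closed X" and X_convex: "convex X" and X_0: "0 \<notin> X"
    and p_range: "exp (-1) \<le> p" "p < 1"
    and S_open: "open S" and X_S: "X \<subseteq> S"
    and grad: "\<And>x. x \<in> S \<Longrightarrow> (\<kappa> has_derivative (\<lambda>h. grad\<kappa> x \<bullet> h)) (at x)"
    and hess: "\<And>x. x \<in> S \<Longrightarrow> (grad\<kappa> has_derivative (\<lambda>h. hess\<kappa> x *v h)) (at x)"
    and \<kappa>_range: "\<And>x. x \<in> X \<Longrightarrow> 0 < \<kappa> x \<and> \<kappa> x \<le> 1"
    and d_pos: "d > 0"
    and d_bound: "\<And>x y. x \<in> X \<Longrightarrow> 0 < y \<Longrightarrow> y < 1 \<Longrightarrow>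
                    1 / omega p (\<kappa> x) y \<ge> d * \<kappa> x"
    and psd: "\<And>x. x \<in> X \<Longrightarrow>
                psd_mat ((d * \<kappa> x) *\<^sub>R hess\<kappa> x - outer_prod (grad\<kappa> x) (grad\<kappa> x))"
  shows "convex_on (X \<times> {0<..<1}) (\<lambda>(x, y). Ufun p (\<kappa> x) y) \<and>
         ((\<forall>x\<in>X. pd_mat ((d * \<kappa> x) *\<^sub>R hess\<kappa> x - outer_prod (grad\<kappa> x) (grad\<kappa> x)))
         \<longrightarrow> strict_convex_on (X \<times> {0<..<1}) (\<lambda>(x, y). Ufun p (\<kappa> x) y))"
proof -
  have p_pos: "0 < p"
    using p_range(1) by (smt (verit) exp_gt_zero)
  note sign = Ufun_segment_second_derivative_sign[OF X_convex p_pos p_range(2)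
      grad[OF subsetD[OF X_S]] hess[OF subsetD[OF X_S]] \<kappa>_range d_pos d_bound psd]
  have convex: "convex (X \<times> {0<..<(1::real)})"
    by (intro convex_Times X_convex convex_real_interval)
  show ?thesis
  proof (intro conjI impI)
    show "convex_on (X \<times> {0<..<1}) (\<lambda>(x, y). Ufun p (\<kappa> x) y)"
      by (rule convex_on_if_second_derivative_along_segments[OF convex]) (use sign in blast)
    show "strict_convex_on (X \<times> {0<..<1}) (\<lambda>(x, y). Ufun p (\<kappa> x) y)"
      if "\<forall>x\<in>X. pd_mat ((d * \<kappa> x) *\<^sub>R hess\<kappa> x - outer_prod (grad\<kappa> x) (grad\<kappa> x))"
      by (rule strict_convex_on_if_second_derivative_along_segments[OF convex]) (use sign that in blast)
  qed
qed

end
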